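(* For every $n\geq 2$, $\deg(\chi:\{0,1\}^n\to\{0,1\}^n)=3/2$.
   Context: For finite sets $X,Y$ and $f:X\to Y$, $\deg(f)=\frac{1}{|X|}\sum_{y\in Y}|f^{-1}(y)|^2$. Identify $w=w_1\cdots w_n\in\{0,1\}^n$ with a configuration of chips on a path with vertices $1,\dots,n$ (vertex $i$ holds $w_i$ chips); this is the unwrapping of a cycle with $n+1$ vertices, where the extra vertex is a sink adjacent to both vertex $1$ (the source) and vertex $n$. Firing: whenever a vertex holds at least $2$ chips, it sends one chip to each of its two neighbors in the cycle; chips sent to the sink disappear (so an endpoint vertex of the path sends one chip to its path neighbor and loses one chip). Firings are repeated until every vertex holds $0$ or $1$ chip (the final configuration does not depend on the order of firings). Define $\chi(w)$ to be the stable configuration obtained by adding one chip to vertex $1$ of the configuration $w$ and then firing until stable. For example, with $n=3$, $\chi(110)=101$. *)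

theory Defs
  imports Complex_Main
begin

definition deg :: "'a set \<Rightarrow> 'b set \<Rightarrow> ('a \<Rightarrow> 'b) \<Rightarrow> real" where
  "deg X Y f = (\<Sum>y\<in>Y. (real (card {x\<in>X. f x = y}))^2) / real (card X)"

(* binary words of length n, w = w_1 ... w_n stored as list; index i (0-based) = vertex i+1 *)
definition words :: "nat \<Rightarrow> nat list set" where
  "words n = {w. length w = n \<and> set w \<subseteq> {0,1}}"

(* firing vertex i (0-based) of the path: lose 2 chips, one to each neighbour in the
   cycle; chips sent to the sink (beyond either end of the path) disappear *)
definition fire :: "nat list \<Rightarrow> nat \<Rightarrow> nat list" where
  "fire c i = (let n = length c;
                   c1 = c[i := c!i - 2];
                   c2 = (if 0 < i then c1[i - 1 := c1!(i - 1) + 1] else c1)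
               in if i + 1 < n then c2[i + 1 := c2!(i + 1) + 1] else c2)"

definition fire_step :: "(nat list \<times> nat list) set" where
  "fire_step = {(c, d). \<exists>i < length c. 2 \<le> c!i \<and> d = fire c i}"

definition stable :: "nat list \<Rightarrow> bool" where
  "stable c \<longleftrightarrow> (\<forall>i < length c. c!i \<le> 1)"

definition add_source :: "nat list \<Rightarrow> nat list" where
  "add_source w = (case w of [] \<Rightarrow> [] | a # v \<Rightarrow> Suc a # v)"

(* chi w: the stable configuration obtained by adding a chip at vertex 1 and firing
   until stable (the result is independent of the firing order) *)
definition chi :: "nat list \<Rightarrow> nat list" where
  "chi w = (THE s. (add_source w, s) \<in> fire_step\<^sup>* \<and> stable s)"

end

theory Submission
  imports Defs
begin

(* Adding a chip to 0v just gives 1v. Adding it to 1v creates a single vertex with two chips;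
   firing it leaves a 0, returns a chip to the left neighbour and moves the surplus one step to
   the right, so the surplus runs through the initial block of 1s of v until it meets a 0 (or
   leaves through the sink). Hence chi (1v) is v with a 1 inserted after its first 0, or with a 0
   appended if v has no 0. Both branches v |-> chi (0v) and v |-> chi (1v) are injective and
   their images meet exactly in the 2^(n-2) values chi (11u), so the squared fibre sizes sum to
   2^n + 2 * 2^(n-2) = (3/2) 2^n. *)

lemma card_fibre_inj_on:
  assumes "inj_on f A"
  shows "card {x \<in> A. f x = y} = of_bool (y \<in> f ` A)"
proof (cases "y \<in> f ` A")
  case True
  then obtain a where "a \<in> A" "y = f a" by blast
  with assms have "{x \<in> A. f x = y} = {a}" by (auto dest: inj_onD)
  with True show ?thesis by simp
next
  case False
  then show ?thesis by (auto simp: card_eq_0_iff)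
qed

lemma sum_card_fibres_squared_inj_on_Un:
  assumes "finite A" "finite B" "finite Y" "f ` (A \<union> B) \<subseteq> Y"
    and "A \<inter> B = {}" "inj_on f A" "inj_on f B"
  shows "(\<Sum>y\<in>Y. card {x \<in> A \<union> B. f x = y} ^ 2) = card A + card B + 2 * card (f ` A \<inter> f ` B)"
proof -
  have "card {x \<in> A \<union> B. f x = y} = card {x \<in> A. f x = y} + card {x \<in> B. f x = y}" for y
    using assms(1,2,5) by (subst card_Un_disjoint[symmetric]) (auto intro: arg_cong[where f = card])
  then have "card {x \<in> A \<union> B. f x = y} ^ 2
      = of_bool (y \<in> f ` A) + of_bool (y \<in> f ` B) + 2 * of_bool (y \<in> f ` A \<inter> f ` B)" for y
    using assms(6,7) by (simp add: card_fibre_inj_on power2_eq_square)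
  then have "(\<Sum>y\<in>Y. card {x \<in> A \<union> B. f x = y} ^ 2)
      = (\<Sum>y\<in>Y. of_bool (y \<in> f ` A)) + (\<Sum>y\<in>Y. of_bool (y \<in> f ` B))
        + 2 * (\<Sum>y\<in>Y. of_bool (y \<in> f ` A \<inter> f ` B))"
    by (simp only: sum.distrib sum_distrib_left)
  moreover have "(\<Sum>y\<in>Y. of_bool (y \<in> S)) = card S" if "S \<subseteq> Y" for S
    using assms(3) that by (simp add: Int_absorb1)
  ultimately have "(\<Sum>y\<in>Y. card {x \<in> A \<union> B. f x = y} ^ 2)
      = card (f ` A) + card (f ` B) + 2 * card (f ` A \<inter> f ` B)"
    using assms(4) by (simp only: image_Un Un_subset_iff le_infI1)
  also have "\<dots> = card A + card B + 2 * card (f ` A \<inter> f ` B)"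
    using assms(6,7) by (simp add: card_image)
  finally show ?thesis .
qed

lemma stable_iff_set: "stable c \<longleftrightarrow> (\<forall>x\<in>set c. x \<le> 1)"
  unfolding stable_def by (auto simp: all_set_conv_all_nth)

lemma stable_simps [simp]:
  "stable []"
  "stable (a # c) \<longleftrightarrow> a \<le> 1 \<and> stable c"
  "stable (c @ d) \<longleftrightarrow> stable c \<and> stable d"
  by (auto simp: stable_iff_set)

lemma stable_no_fire_step: "stable c \<Longrightarrow> (c, d) \<notin> fire_step"
  unfolding stable_def fire_step_def by force

definition stabilizes_to :: "nat list \<Rightarrow> nat list \<Rightarrow> bool" where
  "stabilizes_to c s \<longleftrightarrow> (c, s) \<in> fire_step\<^sup>* \<and> stable s"

lemma stabilizes_to_stable: "stable c \<Longrightarrow> stabilizes_to c s \<longleftrightarrow> s = c"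
  unfolding stabilizes_to_def by (auto elim: converse_rtranclE dest: stable_no_fire_step)

lemma stabilizes_to_forced_step:
  assumes "\<And>d'. (c, d') \<in> fire_step \<longleftrightarrow> d' = d"
  shows "stabilizes_to c s \<longleftrightarrow> stabilizes_to d s"
proof
  assume "stabilizes_to c s"
  then have "(c, s) \<in> fire_step\<^sup>*" "stable s"
    unfolding stabilizes_to_def by auto
  moreover have "\<not> stable c"
    using assms stable_no_fire_step by blast
  ultimately have "c \<noteq> s"
    by blast
  with \<open>(c, s) \<in> fire_step\<^sup>*\<close> obtain d' where "(c, d') \<in> fire_step" "(d', s) \<in> fire_step\<^sup>*"
    by (blast elim: converse_rtranclE)
  moreover from this(1) have "d' = d"
    using assms by blast
  ultimately show "stabilizes_to d s"
    unfolding stabilizes_to_def using \<open>stable s\<close> by simp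
next
  assume "stabilizes_to d s"
  moreover have "(c, d) \<in> fire_step"
    using assms by blast
  ultimately show "stabilizes_to c s"
    unfolding stabilizes_to_def by (blast intro: converse_rtrancl_into_rtrancl)
qed

definition incr_last :: "nat list \<Rightarrow> nat list" where
  "incr_last p = (if p = [] then [] else butlast p @ [Suc (last p)])"

lemma incr_last_snoc [simp]: "incr_last (q @ [a]) = q @ [Suc a]"
  by (simp add: incr_last_def)

lemma stable_incr_last: "stable p \<Longrightarrow> p = [] \<or> last p = 0 \<Longrightarrow> stable (incr_last p)"
  by (cases p rule: rev_exhaust) (auto simp: incr_last_def)

lemma fire_at_length: "fire (p @ 2 # t) (length p) = incr_last p @ 0 # add_source t"
proof (cases p rule: rev_exhaust)
  case Nil
  then show ?thesis by (cases t) (auto simp: fire_def incr_last_def add_source_def Let_def)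
next
  case (snoc q a)
  then show ?thesis
    by (cases t) (auto simp: fire_def incr_last_def add_source_def Let_def list_update_append nth_append)
qed

lemma fire_step_single_hot:
  assumes "stable p" "stable t"
  shows "(p @ 2 # t, d) \<in> fire_step \<longleftrightarrow> d = incr_last p @ 0 # add_source t"
proof -
  have "i = length p" if "i < length (p @ 2 # t)" "2 \<le> (p @ 2 # t) ! i" for i
  proof (rule linorder_cases)
    assume "i < length p"
    then show ?thesis using that assms by (auto simp: stable_def nth_append)
  next
    assume "i > length p"
    then obtain k where "i = Suc (length p + k)" by (metis less_iff_Suc_add)
    then show ?thesis using that assms by (auto simp: stable_def nth_append)
  qed
  then show ?thesis
    unfolding fire_step_def using fire_at_length[of p t] by (auto intro!: exI[of _ "length p"])
qed

fun chi_one :: "nat list \<Rightarrow> nat list" where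
  "chi_one [] = [0]"
| "chi_one (a # t) = (if a = 0 then 0 # 1 # t else 1 # chi_one t)"

(* The vertex left of the two chips is empty (or is the sink), so the chip fired back to it
   keeps the prefix stable; this invariant is the hypothesis on p. *)
lemma stabilizes_to_single_hot:
  assumes "stable p" "stable t" "p = [] \<or> last p = 0"
  shows "stabilizes_to (p @ 2 # t) s \<longleftrightarrow> s = incr_last p @ chi_one t"
  using assms
proof (induction t arbitrary: p)
  case Nil
  then have "stabilizes_to (p @ [2]) s \<longleftrightarrow> stabilizes_to (incr_last p @ [0]) s"
    by (intro stabilizes_to_forced_step) (simp add: fire_step_single_hot add_source_def)
  also have "\<dots> \<longleftrightarrow> s = incr_last p @ [0]"
    using Nil by (simp add: stabilizes_to_stable stable_incr_last)
  finally show ?case by simp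
next
  case (Cons a t)
  then have step: "stabilizes_to (p @ 2 # a # t) s \<longleftrightarrow> stabilizes_to (incr_last p @ 0 # Suc a # t) s"
    by (intro stabilizes_to_forced_step) (simp add: fire_step_single_hot add_source_def)
  have "stable (incr_last p)"
    using Cons.prems by (simp add: stable_incr_last)
  consider "a = 0" | "a = 1"
    using Cons.prems by fastforce
  then show ?case
  proof cases
    case 1
    with step show ?thesis
      using Cons.prems \<open>stable (incr_last p)\<close> by (simp add: stabilizes_to_stable)
  next
    case 2
    have "stabilizes_to ((incr_last p @ [0]) @ 2 # t) s
        \<longleftrightarrow> s = incr_last (incr_last p @ [0]) @ chi_one t"
      using Cons \<open>stable (incr_last p)\<close> by (intro Cons.IH) simp_all
    with step 2 show ?thesis by (simp add: numeral_2_eq_2)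
  qed
qed

lemma chi_eqI: "(\<And>s. stabilizes_to (add_source w) s \<longleftrightarrow> s = r) \<Longrightarrow> chi w = r"
  by (simp add: chi_def stabilizes_to_def)

lemma chi_Cons_0: "stable v \<Longrightarrow> chi (0 # v) = 1 # v"
  by (rule chi_eqI) (simp add: add_source_def stabilizes_to_stable)

lemma chi_Cons_1: "stable v \<Longrightarrow> chi (1 # v) = chi_one v"
  using stabilizes_to_single_hot[of "[]" v]
  by (intro chi_eqI) (simp add: add_source_def incr_last_def numeral_2_eq_2)

lemma words_0: "words 0 = {[]}"
  by (auto simp: words_def)

lemma words_Suc: "words (Suc m) = Cons 0 ` words m \<union> Cons 1 ` words m"
  by (auto simp: words_def length_Suc_conv)

lemma finite_words: "finite (words m)"
  by (induction m) (simp_all add: words_0 words_Suc)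

lemma card_words: "card (words m) = 2 ^ m"
proof (induction m)
  case (Suc m)
  have "card (words (Suc m)) = card (Cons 0 ` words m) + card (Cons 1 ` words m)"
    unfolding words_Suc by (rule card_Un_disjoint) (auto simp: finite_words)
  with Suc show ?case by (simp add: card_image)
qed (simp add: words_0)

lemma stable_if_words: "w \<in> words m \<Longrightarrow> stable w"
  by (auto simp: words_def stable_iff_set)

lemma chi_one_words: "v \<in> words m \<Longrightarrow> chi_one v \<in> words (Suc m)"
  by (induction v arbitrary: m) (auto simp: words_def length_Suc_conv)

lemma inj_on_chi_one: "inj_on chi_one {v. stable v}"
proof -
  have "chi_one v = chi_one v' \<Longrightarrow> v = v'" if "stable v" "stable v'" for v v'
    using that
  proof (induction v arbitrary: v')
    case Nil
    then show ?case by (cases v') (auto split: if_splits)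
  next
    case (Cons a v)
    then show ?case by (cases v') (auto split: if_splits)
  qed
  then show ?thesis by (auto intro: inj_onI)
qed

lemma inj_on_chi_one_words: "inj_on chi_one (words m)"
  using inj_on_chi_one by (rule inj_on_subset) (auto dest: stable_if_words)

lemma words_Cons_1_Int_chi_one:
  "Cons 1 ` words (Suc k) \<inter> chi_one ` words (Suc k) = Cons 1 ` chi_one ` words k"
proof (intro equalityI subsetI)
  fix y
  assume "y \<in> Cons 1 ` words (Suc k) \<inter> chi_one ` words (Suc k)"
  then obtain v w where "y = chi_one v" "y = 1 # w" "v \<in> words (Suc k)"
    by blast
  moreover from this(3) obtain a t where "v = a # t" "a \<in> {0, 1}" "t \<in> words k"
    unfolding words_Suc by blast
  ultimately show "y \<in> Cons 1 ` chi_one ` words k"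
    by (auto split: if_splits)
next
  fix y
  assume "y \<in> Cons 1 ` chi_one ` words k"
  then obtain t where "y = 1 # chi_one t" "t \<in> words k"
    by blast
  moreover have "chi_one t \<in> words (Suc k)" "1 # t \<in> words (Suc k)"
    using \<open>t \<in> words k\<close> chi_one_words words_Suc by auto
  ultimately show "y \<in> Cons 1 ` words (Suc k) \<inter> chi_one ` words (Suc k)"
    by (metis IntI chi_one.simps(2) image_eqI one_neq_zero)
qed

lemma chi_words_Suc:
  assumes "w \<in> words (Suc m)"
  shows "chi w \<in> words (Suc m)"
proof -
  obtain a v where "w = a # v" "a = 0 \<or> a = 1" "v \<in> words m"
    using assms unfolding words_Suc by blast
  then show ?thesis
    using chi_Cons_0 chi_Cons_1 stable_if_words chi_one_words words_Suc by (metis UnI2 imageI)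
qed

lemma sum_card_fibres_chi_squared:
  "(\<Sum>y\<in>words (Suc (Suc k)). card {x \<in> words (Suc (Suc k)). chi x = y} ^ 2) = 3 * 2 ^ Suc k"
proof -
  let ?W = "words (Suc k)"
  have chi_Cons_0_on: "(chi \<circ> Cons 0) v = 1 # v" if "v \<in> ?W" for v
    using that by (simp add: chi_Cons_0 stable_if_words)
  \<comment> \<open>not by simp: it rewrites 1 to Suc 0 before chi_Cons_1 can match\<close>
  have chi_Cons_1_on: "(chi \<circ> Cons 1) v = chi_one v" if "v \<in> ?W" for v
    using that chi_Cons_1 stable_if_words by (metis comp_apply)
  have chi_0: "chi ` Cons 0 ` ?W = Cons 1 ` ?W"
    unfolding image_comp by (rule image_cong [OF refl chi_Cons_0_on])
  have chi_1: "chi ` Cons 1 ` ?W = chi_one ` ?W"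
    unfolding image_comp by (rule image_cong [OF refl chi_Cons_1_on])
  have "inj_on (chi \<circ> Cons 0) ?W \<longleftrightarrow> inj_on (Cons 1) ?W"
    by (rule inj_on_cong) (rule chi_Cons_0_on)
  then have inj_0: "inj_on chi (Cons 0 ` ?W)"
    by (intro inj_on_imageI) simp
  have "inj_on (chi \<circ> Cons 1) ?W \<longleftrightarrow> inj_on chi_one ?W"
    by (rule inj_on_cong) (rule chi_Cons_1_on)
  then have inj_1: "inj_on chi (Cons 1 ` ?W)"
    by (intro inj_on_imageI) (simp only: inj_on_chi_one_words)
  have into: "chi ` (Cons 0 ` ?W \<union> Cons 1 ` ?W) \<subseteq> Cons 0 ` ?W \<union> Cons 1 ` ?W"
    using chi_words_Suc [of _ "Suc k"] unfolding words_Suc [of "Suc k"] by blast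
  have "(\<Sum>y\<in>words (Suc (Suc k)). card {x \<in> words (Suc (Suc k)). chi x = y} ^ 2)
      = card (Cons 0 ` ?W) + card (Cons 1 ` ?W) + 2 * card (chi ` Cons 0 ` ?W \<inter> chi ` Cons 1 ` ?W)"
    unfolding words_Suc [of "Suc k"]
    by (rule sum_card_fibres_squared_inj_on_Un [OF _ _ _ into _ inj_0 inj_1]) (auto simp: finite_words)
  also have "\<dots> = 3 * 2 ^ Suc k"
    unfolding chi_0 chi_1 words_Cons_1_Int_chi_one
    by (simp add: card_image card_words inj_on_chi_one_words)
  finally show ?thesis .
qed

theorem mainTheorem13:
  fixes n :: nat
  assumes "n \<ge> 2"
  shows "deg (words n) (words n) chi = 3 / 2"
proof -
  obtain k where n: "n = Suc (Suc k)"
    using assms by (metis add_2_eq_Suc le_Suc_ex)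
  have "deg (words n) (words n) chi = real (3 * 2 ^ Suc k) / real (2 ^ n)"
    unfolding deg_def card_words n sum_card_fibres_chi_squared [symmetric] by simp
  also have "\<dots> = 3 / 2"
    by (simp add: n)
  finally show ?thesis .
qed

end
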